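(* Let $n\ge 1$, $i\in\{1,\ldots,n-1\}$, and let $C$ be an almost-$s_i$-stable set of transpositions in $S_n$: $s_i\in C$ and there is a unique transposition $\tau$ with $\tau\in C$ but $s_i\tau s_i\notin C$. Put $C_-=C\setminus\{\tau\}$ and $C_+=C\cup\{s_i\tau s_i\}$ (which are $s_i$-stable). For a set $D$ of transpositions write $H_D^{*s_i}=\{f\in H_D\mid f*s_i=f\}$. If $\tau=(i\leftrightarrow k)$, then $$H_C=H_{C_+}^{*s_i}\oplus (x_i-x_k)H_{C_-}^{*s_i}$$ as an internal direct sum of $\mathbb{C}[t_1,\ldots,t_n]$-submodules of $H$ equipped with the dot action. Otherwise $\tau=(i+1\leftrightarrow k)$, and $$H_C=H_{C_+}^{*s_i}\oplus (x_k-x_{i+1})H_{C_-}^{*s_i}$$ as an internal direct sum of $\mathbb{C}[t_1,\ldots,t_n]$-submodules of $H$ equipped with the dot action.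
   Context: Let $S_n$ be the symmetric group on $\{1,\ldots,n\}$ with $(vw)(j)=v(w(j))$, and $s_i=(i\leftrightarrow i+1)$. Let $H=\mathrm{Fun}(S_n,\mathbb{C}[t_1,\ldots,t_n])$ with pointwise operations; it is a $\mathbb{C}[t_1,\ldots,t_n]$-module via constant functions. The star action (right) is $(f*w)(v;t_1,\ldots,t_n)=f(vw^{-1};t_1,\ldots,t_n)$, and the dot action (left) is $(w\cdot f)(v;t_1,\ldots,t_n)=f(w^{-1}v;t_{w(1)},\ldots,t_{w(n)})$. Let $x_j\in H$ be the function $v\mapsto t_{v(j)}$. For a transposition $\sigma=(a\leftrightarrow b)$, $f\in H$ satisfies condition $\sigma$ if $f-f*\sigma=(x_a-x_b)g$ for some $g\in H$; these form a subring $H_\sigma$, and for a set $D$ of transpositions $H_D=\bigcap_{\sigma\in D}H_\sigma$ (with $H_\varnothing=H$). A set $D$ of transpositions is $s_i$-stable if $s_i\in D$ and $s_iDs_i=D$. *)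

theory Defs
  imports "HOL-Library.Poly_Mapping" "HOL-Combinatorics.Transposition" "HOL-Combinatorics.Permutations" Complex_Main
begin

type_synonym cpoly = "(nat \<Rightarrow>\<^sub>0 nat) \<Rightarrow>\<^sub>0 complex"

definition tvar :: "nat \<Rightarrow> cpoly" where
  "tvar j = Poly_Mapping.single (Poly_Mapping.single j 1) 1"

definition Pn :: "nat \<Rightarrow> cpoly set" where
  "Pn n = {p. \<forall>m \<in> Poly_Mapping.keys p. Poly_Mapping.keys m \<subseteq> {1..n}}"

definition subst_vars :: "(nat \<Rightarrow> nat) \<Rightarrow> cpoly \<Rightarrow> cpoly" where
  "subst_vars w p = (\<Sum>m \<in> Poly_Mapping.keys p.
      Poly_Mapping.single (\<Sum>j \<in> Poly_Mapping.keys m. Poly_Mapping.single (w j) (Poly_Mapping.lookup m j)) (Poly_Mapping.lookup p m))"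

text \<open>S_n is the set of permutations of {1..n}; elements of H = Fun(S_n, C[t_1..t_n]) are
 represented as functions on all maps nat => nat that vanish outside S_n.\<close>
definition Hs :: "nat \<Rightarrow> ((nat \<Rightarrow> nat) \<Rightarrow> cpoly) set" where
  "Hs n = {f. (\<forall>v. v permutes {1..n} \<longrightarrow> f v \<in> Pn n) \<and> (\<forall>v. \<not> v permutes {1..n} \<longrightarrow> f v = 0)}"

definition xfun :: "nat \<Rightarrow> nat \<Rightarrow> (nat \<Rightarrow> nat) \<Rightarrow> cpoly" where
  "xfun n j = (\<lambda>v. if v permutes {1..n} then tvar (v j) else 0)"

definition star :: "((nat \<Rightarrow> nat) \<Rightarrow> cpoly) \<Rightarrow> (nat \<Rightarrow> nat) \<Rightarrow> ((nat \<Rightarrow> nat) \<Rightarrow> cpoly)" where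
  "star f w = (\<lambda>v. f (v \<circ> inv w))"

definition dot :: "(nat \<Rightarrow> nat) \<Rightarrow> ((nat \<Rightarrow> nat) \<Rightarrow> cpoly) \<Rightarrow> ((nat \<Rightarrow> nat) \<Rightarrow> cpoly)" where
  "dot w f = (\<lambda>v. subst_vars w (f (inv w \<circ> v)))"

definition sref :: "nat \<Rightarrow> nat \<Rightarrow> nat" where
  "sref i = transpose i (Suc i)"

definition transps :: "nat \<Rightarrow> (nat \<Rightarrow> nat) set" where
  "transps n = {transpose a b | a b. a \<in> {1..n} \<and> b \<in> {1..n} \<and> a \<noteq> b}"

definition satisfies :: "nat \<Rightarrow> (nat \<Rightarrow> nat) \<Rightarrow> ((nat \<Rightarrow> nat) \<Rightarrow> cpoly) \<Rightarrow> bool" where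
  "satisfies n \<sigma> f = (\<exists>a b. a \<noteq> b \<and> \<sigma> = transpose a b \<and>
      (\<exists>g \<in> Hs n. \<forall>v. f v - star f \<sigma> v = (xfun n a v - xfun n b v) * g v))"

definition HD :: "nat \<Rightarrow> (nat \<Rightarrow> nat) set \<Rightarrow> ((nat \<Rightarrow> nat) \<Rightarrow> cpoly) set" where
  "HD n D = {f \<in> Hs n. \<forall>\<sigma> \<in> D. satisfies n \<sigma> f}"

definition HDinv :: "nat \<Rightarrow> nat \<Rightarrow> (nat \<Rightarrow> nat) set \<Rightarrow> ((nat \<Rightarrow> nat) \<Rightarrow> cpoly) set" where
  "HDinv n i D = {f \<in> HD n D. star f (sref i) = f}"

definition dot_submodule :: "nat \<Rightarrow> ((nat \<Rightarrow> nat) \<Rightarrow> cpoly) set \<Rightarrow> bool" where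
  "dot_submodule n A = (A \<subseteq> Hs n \<and> (\<lambda>v. 0) \<in> A \<and>
     (\<forall>f \<in> A. \<forall>g \<in> A. (\<lambda>v. f v + g v) \<in> A) \<and>
     (\<forall>p \<in> Pn n. \<forall>f \<in> A. (\<lambda>v. p * f v) \<in> A) \<and>
     (\<forall>w. w permutes {1..n} \<longrightarrow> (\<forall>f \<in> A. dot w f \<in> A)))"

definition is_direct_sum :: "nat \<Rightarrow> ((nat \<Rightarrow> nat) \<Rightarrow> cpoly) set \<Rightarrow> ((nat \<Rightarrow> nat) \<Rightarrow> cpoly) set
    \<Rightarrow> ((nat \<Rightarrow> nat) \<Rightarrow> cpoly) set \<Rightarrow> bool" where
  "is_direct_sum n M A B = (dot_submodule n A \<and> dot_submodule n B \<and>
     M = {(\<lambda>v. a v + b v) | a b. a \<in> A \<and> b \<in> B} \<and> A \<inter> B = {(\<lambda>v. 0)})"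

definition mult_set :: "((nat \<Rightarrow> nat) \<Rightarrow> cpoly) \<Rightarrow> ((nat \<Rightarrow> nat) \<Rightarrow> cpoly) set \<Rightarrow> ((nat \<Rightarrow> nat) \<Rightarrow> cpoly) set" where
  "mult_set y S = {(\<lambda>v. y v * g v) | g. g \<in> S}"

end

theory Submission
  imports Defs
begin

text \<open>Since s_i \<in> C, every f \<in> H_C has a divided difference: f - f*s_i = (x_i - x_(i+1)) g with
 g *s_i-invariant. The multiplier y (x_i - x_k, resp. x_k - x_(i+1)) satisfies
 y - y*s_i = x_i - x_(i+1), so f - y g is *s_i-invariant; it satisfies the conditions of C and,
 being invariant, also the condition s_i \<tau> s_i. The quotient g satisfies every condition of C_-:
 s_i by invariance, and any other \<sigma> because both \<sigma> and s_i \<sigma> s_i lie in C, so that x_a - x_b can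
 be cancelled from the divided difference. Conversely y H_(C_-) \<subseteq> H_C since y is anti-invariant
 under \<tau> and divisible by the corresponding difference of variables. The sum is direct: if y b and
 b are both *s_i-invariant, then (y - y*s_i) b = (x_i - x_(i+1)) b = 0, so b = 0.\<close>

section \<open>Substitution of variables in polynomials\<close>

definition pconst :: "complex \<Rightarrow> cpoly" where
  "pconst c = Poly_Mapping.single 0 c"

definition lin_ext :: "((nat \<Rightarrow>\<^sub>0 nat) \<Rightarrow> cpoly) \<Rightarrow> cpoly \<Rightarrow> cpoly" where
  "lin_ext F p = (\<Sum>m\<in>Poly_Mapping.keys p. pconst (Poly_Mapping.lookup p m) * F m)"

definition monom_eval :: "(nat \<Rightarrow> cpoly) \<Rightarrow> (nat \<Rightarrow>\<^sub>0 nat) \<Rightarrow> cpoly" where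
  "monom_eval \<sigma> m = (\<Prod>j\<in>Poly_Mapping.keys m. \<sigma> j ^ Poly_Mapping.lookup m j)"

definition psubst :: "(nat \<Rightarrow> cpoly) \<Rightarrow> cpoly \<Rightarrow> cpoly" where
  "psubst \<sigma> = lin_ext (monom_eval \<sigma>)"

lemma pconst_add: "pconst (a + b) = pconst a + pconst b"
  by (simp add: pconst_def single_add)

lemma pconst_mult: "pconst (a * b) = pconst a * pconst b"
  by (simp add: pconst_def mult_single)

lemma pconst_mult_single_one: "pconst c * Poly_Mapping.single m 1 = Poly_Mapping.single m c"
  by (simp add: pconst_def mult_single)

lemma poly_mapping_sum_single:
  "(p :: 'a \<Rightarrow>\<^sub>0 'b::comm_monoid_add) =
     (\<Sum>m\<in>Poly_Mapping.keys p. Poly_Mapping.single m (Poly_Mapping.lookup p m))"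
  by (rule poly_mapping_eqI)
     (auto simp: lookup_sum lookup_single when_def in_keys_iff split: if_splits)

lemma lin_ext_superset:
  assumes "finite S" "Poly_Mapping.keys p \<subseteq> S"
  shows "lin_ext F p = (\<Sum>m\<in>S. pconst (Poly_Mapping.lookup p m) * F m)"
  unfolding lin_ext_def
  by (rule sum.mono_neutral_left) (use assms in \<open>auto simp: in_keys_iff pconst_def\<close>)

lemma lin_ext_add: "lin_ext F (p + q) = lin_ext F p + lin_ext F q"
proof -
  let ?S = "Poly_Mapping.keys p \<union> Poly_Mapping.keys q"
  have "lin_ext F (p + q) = (\<Sum>m\<in>?S. pconst (Poly_Mapping.lookup (p + q) m) * F m)"
    by (rule lin_ext_superset) (auto dest: keys_add[THEN subsetD])
  also have "\<dots> = lin_ext F p + lin_ext F q"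
    by (simp add: lookup_add pconst_add distrib_right sum.distrib
        lin_ext_superset[of ?S p] lin_ext_superset[of ?S q])
  finally show ?thesis .
qed

lemma lin_ext_diff: "lin_ext F (p - q) = lin_ext F p - lin_ext F q"
  using lin_ext_add[of F "p - q" q] by (simp add: eq_diff_eq)

lemma lin_ext_single: "lin_ext F (Poly_Mapping.single m c) = pconst c * F m"
  by (cases "c = 0") (auto simp: lin_ext_def pconst_def)

lemma lin_ext_zero [simp]: "lin_ext F 0 = 0"
  by (simp add: lin_ext_def)

lemma lin_ext_sum: "lin_ext F (sum f A) = (\<Sum>a\<in>A. lin_ext F (f a))"
  by (induction A rule: infinite_finite_induct) (simp_all add: lin_ext_add)

lemma lin_ext_mult:
  assumes "\<And>m m'. F (m + m') = F m * F m'"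
  shows "lin_ext F (p * q) = lin_ext F p * lin_ext F q"
proof -
  have "p * q = (\<Sum>m\<in>Poly_Mapping.keys p. \<Sum>m'\<in>Poly_Mapping.keys q.
       Poly_Mapping.single (m + m') (Poly_Mapping.lookup p m * Poly_Mapping.lookup q m'))"
    by (subst poly_mapping_sum_single[of p], subst poly_mapping_sum_single[of q])
       (simp add: sum_product mult_single)
  then have "lin_ext F (p * q) = (\<Sum>m\<in>Poly_Mapping.keys p. \<Sum>m'\<in>Poly_Mapping.keys q.
       (pconst (Poly_Mapping.lookup p m) * F m) * (pconst (Poly_Mapping.lookup q m') * F m'))"
    by (simp add: lin_ext_sum lin_ext_single pconst_mult assms mult_ac)
  also have "\<dots> = lin_ext F p * lin_ext F q"
    by (simp add: lin_ext_def sum_product)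
  finally show ?thesis .
qed

lemma lin_ext_dvd: "(\<And>m. d dvd F m) \<Longrightarrow> d dvd lin_ext F p"
  unfolding lin_ext_def by (intro dvd_sum dvd_mult) auto

lemma monom_eval_superset:
  assumes "finite K" "Poly_Mapping.keys m \<subseteq> K"
  shows "monom_eval \<sigma> m = (\<Prod>j\<in>K. \<sigma> j ^ Poly_Mapping.lookup m j)"
  unfolding monom_eval_def
  by (rule prod.mono_neutral_left) (use assms in \<open>auto simp: in_keys_iff\<close>)

lemma monom_eval_add: "monom_eval \<sigma> (m + m') = monom_eval \<sigma> m * monom_eval \<sigma> m'"
proof -
  let ?K = "Poly_Mapping.keys m \<union> Poly_Mapping.keys m'"
  have "monom_eval \<sigma> (m + m') = (\<Prod>j\<in>?K. \<sigma> j ^ Poly_Mapping.lookup (m + m') j)"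
    by (rule monom_eval_superset) (auto dest: keys_add[THEN subsetD])
  also have "\<dots> = monom_eval \<sigma> m * monom_eval \<sigma> m'"
    by (simp add: lookup_add power_add prod.distrib
        monom_eval_superset[of ?K m] monom_eval_superset[of ?K m'])
  finally show ?thesis .
qed

lemma tvar_power: "tvar j ^ k = Poly_Mapping.single (Poly_Mapping.single j k) 1"
  by (induction k) (simp_all add: tvar_def mult_single single_add[symmetric])

lemma monom_eval_tvar_comp:
  "monom_eval (\<lambda>j. tvar (w j)) m =
     Poly_Mapping.single (\<Sum>j\<in>Poly_Mapping.keys m. Poly_Mapping.single (w j) (Poly_Mapping.lookup m j)) 1"
proof -
  have "(\<Prod>j\<in>K. Poly_Mapping.single (h j) (1::complex)) = Poly_Mapping.single (\<Sum>j\<in>K. h j) 1"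
    for K and h :: "nat \<Rightarrow> nat \<Rightarrow>\<^sub>0 nat"
    by (induction K rule: infinite_finite_induct) (auto simp: mult_single)
  then show ?thesis
    by (simp add: monom_eval_def tvar_power)
qed

lemma psubst_diff: "psubst \<sigma> (p - q) = psubst \<sigma> p - psubst \<sigma> q"
  by (simp add: psubst_def lin_ext_diff)

lemma psubst_mult: "psubst \<sigma> (p * q) = psubst \<sigma> p * psubst \<sigma> q"
  by (simp add: psubst_def lin_ext_mult monom_eval_add)

lemma psubst_tvar: "psubst \<sigma> (tvar j) = \<sigma> j"
  by (simp add: psubst_def tvar_def lin_ext_single monom_eval_def pconst_def)

lemma psubst_tvar_id: "psubst tvar p = p"
  using monom_eval_tvar_comp[of "\<lambda>j. j"] poly_mapping_sum_single[of p]
  by (simp add: psubst_def lin_ext_def pconst_mult_single_one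
      flip: poly_mapping_sum_single)

lemma subst_vars_eq_psubst: "subst_vars w = psubst (\<lambda>j. tvar (w j))"
  by (simp add: fun_eq_iff psubst_def lin_ext_def monom_eval_tvar_comp
      pconst_mult_single_one subst_vars_def)

lemma dvd_diff_power: "(d::'a::comm_ring_1) dvd a - b \<Longrightarrow> d dvd a ^ k - b ^ k"
proof (induction k)
  case (Suc k)
  have "a ^ Suc k - b ^ Suc k = a * (a ^ k - b ^ k) + (a - b) * b ^ k"
    by (simp add: algebra_simps)
  then show ?case using Suc by simp
qed simp

lemma dvd_diff_prod:
  "(\<And>j. j \<in> K \<Longrightarrow> (d::'a::comm_ring_1) dvd f j - g j) \<Longrightarrow> d dvd prod f K - prod g K"
proof (induction K rule: infinite_finite_induct)
  case (insert x F)
  have "prod f (insert x F) - prod g (insert x F) = f x * (prod f F - prod g F) + (f x - g x) * prod g F"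
    using insert by (simp add: algebra_simps)
  then show ?case using insert by simp
qed auto

lemma dvd_diff_psubst:
  assumes "\<And>j. d dvd tvar j - \<sigma> j"
  shows "d dvd p - psubst \<sigma> p"
proof -
  have "p - psubst \<sigma> p = lin_ext (\<lambda>m. monom_eval tvar m - monom_eval \<sigma> m) p"
    by (subst (1) psubst_tvar_id[symmetric])
       (simp add: psubst_def lin_ext_def sum_subtractf right_diff_distrib)
  also have "d dvd \<dots>"
    by (rule lin_ext_dvd) (unfold monom_eval_def, intro dvd_diff_prod dvd_diff_power assms)
  finally show ?thesis .
qed

lemma tvar_eq_iff [simp]: "tvar a = tvar b \<longleftrightarrow> a = b"
proof
  assume "tvar a = tvar b"
  then have "Poly_Mapping.single a (1::nat) = Poly_Mapping.single b 1"
    using keys_single[of "Poly_Mapping.single a (1::nat)" "1::complex"] by (simp add: tvar_def)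
  then show "a = b"
    using keys_single[of a "1::nat"] by simp
qed simp

lemma tvar_diff_dvd_iff: "(tvar a - tvar b) dvd p \<longleftrightarrow> psubst (tvar(a := tvar b)) p = 0"
proof
  assume "(tvar a - tvar b) dvd p"
  then obtain r where "p = (tvar a - tvar b) * r" ..
  then show "psubst (tvar(a := tvar b)) p = 0"
    by (simp add: psubst_mult psubst_diff psubst_tvar)
next
  assume "psubst (tvar(a := tvar b)) p = 0"
  moreover have "(tvar a - tvar b) dvd p - psubst (tvar(a := tvar b)) p"
    by (rule dvd_diff_psubst) simp
  ultimately show "(tvar a - tvar b) dvd p" by simp
qed

lemma tvar_diff_dvd_mult_cancel:
  assumes dvd: "(tvar a - tvar b) dvd (tvar c - tvar d) * p"
    and "c \<noteq> d" "{c, d} \<noteq> {a, b}"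
  shows "(tvar a - tvar b) dvd p"
proof -
  let ?\<phi> = "tvar(a := tvar b)"
  have "?\<phi> c \<noteq> ?\<phi> d" using assms(2,3) by auto
  then show ?thesis
    using dvd by (simp add: tvar_diff_dvd_iff psubst_mult psubst_diff psubst_tvar)
qed

section \<open>The subring C[t_1, ..., t_n]\<close>

lemma Pn_zero [simp]: "0 \<in> Pn n"
  by (simp add: Pn_def)

lemma Pn_add: "p \<in> Pn n \<Longrightarrow> q \<in> Pn n \<Longrightarrow> p + q \<in> Pn n"
  using keys_add[of p q] by (auto simp: Pn_def)

lemma Pn_diff: "p \<in> Pn n \<Longrightarrow> q \<in> Pn n \<Longrightarrow> p - q \<in> Pn n"
  using keys_diff[of p q] by (auto simp: Pn_def)

lemma Pn_mult:
  assumes "p \<in> Pn n" "q \<in> Pn n"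
  shows "p * q \<in> Pn n"
proof (unfold Pn_def, intro CollectI ballI)
  fix m assume "m \<in> Poly_Mapping.keys (p * q)"
  then obtain a b where "m = a + b" "a \<in> Poly_Mapping.keys p" "b \<in> Poly_Mapping.keys q"
    using keys_mult[of p q] by blast
  moreover have "Poly_Mapping.keys a \<subseteq> {1..n}" "Poly_Mapping.keys b \<subseteq> {1..n}"
    using assms \<open>a \<in> _\<close> \<open>b \<in> _\<close> by (auto simp: Pn_def)
  ultimately show "Poly_Mapping.keys m \<subseteq> {1..n}"
    using keys_add[of a b] by blast
qed

lemma Pn_sum: "(\<And>a. a \<in> A \<Longrightarrow> f a \<in> Pn n) \<Longrightarrow> sum f A \<in> Pn n"
  by (induction A rule: infinite_finite_induct) (auto intro: Pn_add)

lemma Pn_single: "Poly_Mapping.keys m \<subseteq> {1..n} \<Longrightarrow> Poly_Mapping.single m c \<in> Pn n"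
  by (simp add: Pn_def)

lemma Pn_tvar: "j \<in> {1..n} \<Longrightarrow> tvar j \<in> Pn n"
  by (simp add: tvar_def Pn_single)

definition trunc_vars :: "nat \<Rightarrow> cpoly \<Rightarrow> cpoly" where
  "trunc_vars n = psubst (\<lambda>j. if j \<in> {1..n} then tvar j else 0)"

lemma monom_eval_trunc:
  "monom_eval (\<lambda>j. if j \<in> {1..n} then tvar j else 0) m =
     (if Poly_Mapping.keys m \<subseteq> {1..n} then Poly_Mapping.single m 1 else 0)"
proof (cases "Poly_Mapping.keys m \<subseteq> {1..n}")
  case True
  then have "monom_eval (\<lambda>j. if j \<in> {1..n} then tvar j else 0) m = monom_eval tvar m"
    unfolding monom_eval_def by (intro prod.cong) auto
  then show ?thesis
    using True monom_eval_tvar_comp[of "\<lambda>j. j" m] poly_mapping_sum_single[of m] by simp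
next
  case False
  then obtain j where "j \<in> Poly_Mapping.keys m" "j \<notin> {1..n}" by blast
  then show ?thesis
    using False unfolding monom_eval_def
    by (subst prod_zero) (auto simp: in_keys_iff)
qed

lemma trunc_vars_in_Pn: "trunc_vars n p \<in> Pn n"
  unfolding trunc_vars_def psubst_def lin_ext_def monom_eval_trunc
  by (intro Pn_sum) (auto simp: pconst_mult_single_one intro!: Pn_single)

lemma trunc_vars_eq_self: "p \<in> Pn n \<Longrightarrow> trunc_vars n p = p"
  unfolding trunc_vars_def psubst_def lin_ext_def monom_eval_trunc
  by (subst (2) poly_mapping_sum_single, rule sum.cong) (auto simp: pconst_mult_single_one Pn_def)

text \<open>Divisibility in C[t_1, t_2, ...] between elements of C[t_1..t_n] already holds in
 C[t_1..t_n]: truncating the variables beyond t_n fixes both and is multiplicative.\<close>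
lemma dvd_PnE:
  assumes "d \<in> Pn n" "p \<in> Pn n" "d dvd p"
  obtains r where "r \<in> Pn n" "p = d * r"
proof -
  obtain r where "p = d * r" using assms(3) ..
  then have "trunc_vars n p = trunc_vars n d * trunc_vars n r"
    by (simp add: trunc_vars_def psubst_mult)
  then show ?thesis
    using that trunc_vars_in_Pn trunc_vars_eq_self assms(1,2) by metis
qed

lemma subst_vars_Pn:
  assumes "\<And>j. j \<in> {1..n} \<Longrightarrow> w j \<in> {1..n}" and "p \<in> Pn n"
  shows "subst_vars w p \<in> Pn n"
  unfolding subst_vars_def
proof (intro Pn_sum Pn_single subsetI)
  fix m x assume m: "m \<in> Poly_Mapping.keys p"
  assume "x \<in> Poly_Mapping.keys
            (\<Sum>j\<in>Poly_Mapping.keys m. Poly_Mapping.single (w j) (Poly_Mapping.lookup m j))"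
  then have "x \<in> (\<Union>j\<in>Poly_Mapping.keys m.
      Poly_Mapping.keys (Poly_Mapping.single (w j) (Poly_Mapping.lookup m j)))"
    by (rule keys_sum[THEN subsetD])
  then obtain j where j: "j \<in> Poly_Mapping.keys m" "x = w j"
    by (auto split: if_splits)
  have "j \<in> {1..n}"
    using assms(2) m j(1) unfolding Pn_def by blast
  then show "x \<in> {1..n}"
    using assms(1) j(2) by blast
qed

lemma subst_vars_mult: "subst_vars w (p * q) = subst_vars w p * subst_vars w q"
  by (simp add: subst_vars_eq_psubst psubst_mult)

lemma subst_vars_diff: "subst_vars w (p - q) = subst_vars w p - subst_vars w q"
  by (simp add: subst_vars_eq_psubst psubst_diff)

lemma subst_vars_tvar: "subst_vars w (tvar j) = tvar (w j)"
  by (simp add: subst_vars_eq_psubst psubst_tvar)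

lemma subst_vars_zero [simp]: "subst_vars w 0 = 0"
  by (simp add: subst_vars_def)

section \<open>Permutations and transpositions\<close>

lemma permutes_comp_transpose_iff:
  assumes "a \<in> {1..n}" "b \<in> {1..n}"
  shows "(v \<circ> transpose a b) permutes {1..n} \<longleftrightarrow> v permutes {1..n}"
proof
  assume "(v \<circ> transpose a b) permutes {1..n}"
  then have "(v \<circ> transpose a b \<circ> transpose a b) permutes {1..n}"
    by (rule permutes_compose[OF permutes_swap_id[OF assms]])
  then show "v permutes {1..n}" by (simp add: comp_assoc)
qed (rule permutes_compose[OF permutes_swap_id[OF assms]])

lemma permutes_inv_comp_iff:
  assumes "w permutes {1..n}"
  shows "(inv w \<circ> v) permutes {1..n} \<longleftrightarrow> v permutes {1..n}"
proof
  assume "(inv w \<circ> v) permutes {1..n}"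
  then have "(w \<circ> (inv w \<circ> v)) permutes {1..n}" by (rule permutes_compose[OF _ assms])
  then show "v permutes {1..n}" by (simp add: comp_assoc[symmetric] permutes_inv_o(1)[OF assms])
qed (rule permutes_compose[OF _ permutes_inv[OF assms]])

lemma transpose_conj:
  "transpose c d \<circ> transpose a b \<circ> transpose c d = transpose (transpose c d a) (transpose c d b)"
proof -
  let ?t = "transpose c d" and ?T = "transpose (transpose c d a) (transpose c d b)"
  have "?T \<circ> ?t = ?t \<circ> transpose a b"
    using transpose_comp_eq[of ?t "?t a" "?t b"] by simp
  then show ?thesis
    by (metis comp_assoc comp_id transpose_comp_involutory)
qed

lemma transpose_eq_transpose_cases:
  assumes "transpose a b = transpose a' b'" "a \<noteq> b"
  shows "(a' = a \<and> b' = b) \<or> (a' = b \<and> b' = a)"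
proof -
  have "transpose a' b' a = b" "transpose a' b' b = a"
    using assms(1) by (metis transpose_apply_first, metis transpose_apply_second)
  then show ?thesis
    using assms(2) unfolding transpose_def by presburger
qed

lemma transpose_in_transps_iff: "transpose a b \<in> transps n \<longleftrightarrow> a \<in> {1..n} \<and> b \<in> {1..n} \<and> a \<noteq> b"
proof
  assume "transpose a b \<in> transps n"
  then obtain a' b' where "transpose a b = transpose a' b'" "a' \<in> {1..n}" "b' \<in> {1..n}" "a' \<noteq> b'"
    unfolding transps_def by blast
  moreover from this have "a \<noteq> b"
    by (metis transpose_eq_id_iff transpose_same)
  ultimately show "a \<in> {1..n} \<and> b \<in> {1..n} \<and> a \<noteq> b"
    using transpose_eq_transpose_cases[of a' b' a b] by auto
qed (auto simp: transps_def)

lemma sref_range: "i \<in> {1..n} \<Longrightarrow> Suc i \<in> {1..n} \<Longrightarrow> a \<in> {1..n} \<Longrightarrow> sref i a \<in> {1..n}"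
  unfolding sref_def transpose_def by auto

lemma sref_eq_iff: "sref i a = sref i b \<longleftrightarrow> a = b"
  unfolding sref_def by (rule inj_eq[OF inj_transpose])

lemma sref_conj_transpose: "sref i \<circ> transpose a b \<circ> sref i = transpose (sref i a) (sref i b)"
  unfolding sref_def by (rule transpose_conj)

lemma permutes_comp_sref_iff:
  "i \<in> {1..n} \<Longrightarrow> Suc i \<in> {1..n} \<Longrightarrow> (v \<circ> sref i) permutes {1..n} \<longleftrightarrow> v permutes {1..n}"
  unfolding sref_def by (rule permutes_comp_transpose_iff)

lemma transps_moved_by_sref:
  assumes "\<sigma> \<in> transps n" "sref i \<circ> \<sigma> \<circ> sref i \<noteq> \<sigma>" "\<nexists>k. \<sigma> = transpose i k"
  obtains k where "\<sigma> = transpose k (Suc i)"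
proof -
  obtain a b where ab: "\<sigma> = transpose a b"
    using assms(1) unfolding transps_def by blast
  then have "a \<noteq> i" "b \<noteq> i"
    using assms(3) transpose_commute by metis+
  moreover have "a = Suc i \<or> b = Suc i"
  proof (rule ccontr)
    assume "\<not> (a = Suc i \<or> b = Suc i)"
    then have "sref i \<circ> \<sigma> \<circ> sref i = \<sigma>"
      unfolding ab sref_conj_transpose using \<open>a \<noteq> i\<close> \<open>b \<noteq> i\<close> by (simp add: sref_def)
    then show False
      using assms(2) by simp
  qed
  ultimately show ?thesis
    using that ab transpose_commute by metis
qed

lemma permutes_range: "v permutes {1..n} \<Longrightarrow> j \<in> {1..n} \<Longrightarrow> v j \<in> {1..n}"
  by (metis permutes_in_image)

section \<open>The ring H and the conditions\<close>

lemma HsI: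
  "(\<And>v. v permutes {1..n} \<Longrightarrow> f v \<in> Pn n) \<Longrightarrow> (\<And>v. \<not> v permutes {1..n} \<Longrightarrow> f v = 0) \<Longrightarrow> f \<in> Hs n"
  by (simp add: Hs_def)

lemma Hs_Pn: "f \<in> Hs n \<Longrightarrow> v permutes {1..n} \<Longrightarrow> f v \<in> Pn n"
  by (simp add: Hs_def)

lemma Hs_outside: "f \<in> Hs n \<Longrightarrow> \<not> v permutes {1..n} \<Longrightarrow> f v = 0"
  by (simp add: Hs_def)

lemma Hs_pointwise:
  assumes "f \<in> Hs n" "g \<in> Hs n"
    and "\<And>p q. p \<in> Pn n \<Longrightarrow> q \<in> Pn n \<Longrightarrow> h p q \<in> Pn n" "h 0 0 = 0"
  shows "(\<lambda>v. h (f v) (g v)) \<in> Hs n"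
  using assms by (simp add: Hs_def)

lemma Hs_zero: "(\<lambda>v. 0) \<in> Hs n"
  by (simp add: Hs_def)

lemma Hs_add: "f \<in> Hs n \<Longrightarrow> g \<in> Hs n \<Longrightarrow> (\<lambda>v. f v + g v) \<in> Hs n"
  by (rule Hs_pointwise) (simp_all add: Pn_add)

lemma Hs_diff: "f \<in> Hs n \<Longrightarrow> g \<in> Hs n \<Longrightarrow> (\<lambda>v. f v - g v) \<in> Hs n"
  by (rule Hs_pointwise) (simp_all add: Pn_diff)

lemma Hs_mult: "f \<in> Hs n \<Longrightarrow> g \<in> Hs n \<Longrightarrow> (\<lambda>v. f v * g v) \<in> Hs n"
  by (rule Hs_pointwise) (simp_all add: Pn_mult)

lemma Hs_cmult: "p \<in> Pn n \<Longrightarrow> g \<in> Hs n \<Longrightarrow> (\<lambda>v. p * g v) \<in> Hs n"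
  using Hs_pointwise[of g n g "\<lambda>_ q. p * q"] by (simp add: Pn_mult)

lemma xfun_permutes: "v permutes {1..n} \<Longrightarrow> xfun n j v = tvar (v j)"
  by (simp add: xfun_def)

lemma xfun_outside: "\<not> v permutes {1..n} \<Longrightarrow> xfun n j v = 0"
  by (simp add: xfun_def)

lemma xfun_Hs:
  assumes "j \<in> {1..n}"
  shows "xfun n j \<in> Hs n"
proof (rule HsI)
  fix v assume v: "v permutes {1..n}"
  show "xfun n j v \<in> Pn n"
    using Pn_tvar[OF permutes_range[OF v assms]] by (simp only: xfun_permutes[OF v])
qed (rule xfun_outside)

definition cond_holds :: "nat \<Rightarrow> nat \<Rightarrow> nat \<Rightarrow> ((nat \<Rightarrow> nat) \<Rightarrow> cpoly) \<Rightarrow> bool" where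
  "cond_holds n a b f \<longleftrightarrow> (\<forall>v. v permutes {1..n} \<longrightarrow>
      (tvar (v a) - tvar (v b)) dvd (f v - f (v \<circ> transpose a b)))"

definition conds_hold :: "nat \<Rightarrow> (nat \<Rightarrow> nat) set \<Rightarrow> ((nat \<Rightarrow> nat) \<Rightarrow> cpoly) \<Rightarrow> bool" where
  "conds_hold n D f \<longleftrightarrow>
     (\<forall>a\<in>{1..n}. \<forall>b\<in>{1..n}. a \<noteq> b \<longrightarrow> transpose a b \<in> D \<longrightarrow> cond_holds n a b f)"

lemma cond_holds_commute: "cond_holds n b a f = cond_holds n a b f"
proof -
  have "(tvar (v b) - tvar (v a)) dvd x \<longleftrightarrow> (tvar (v a) - tvar (v b)) dvd x" for v x
    using minus_dvd_iff[of "tvar (v a) - tvar (v b)" x] by simp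
  then show ?thesis
    unfolding cond_holds_def by (simp add: transpose_commute)
qed

lemma cond_holds_transpose_eq:
  "transpose a b = transpose a' b' \<Longrightarrow> a \<noteq> b \<Longrightarrow> cond_holds n a' b' f = cond_holds n a b f"
  using transpose_eq_transpose_cases[of a b a' b'] cond_holds_commute[of n a b f] by auto

lemma cond_holds_quotient:
  assumes f: "f \<in> Hs n" and ab: "a \<in> {1..n}" "b \<in> {1..n}" and "cond_holds n a b f"
  obtains g where "g \<in> Hs n"
    "\<And>v. f v - f (v \<circ> transpose a b) = (xfun n a v - xfun n b v) * g v"
proof -
  let ?P = "\<lambda>v r. r \<in> Pn n \<and> f v - f (v \<circ> transpose a b) = (tvar (v a) - tvar (v b)) * r"
  have "\<exists>r. ?P v r" if v: "v permutes {1..n}" for v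
  proof -
    have "tvar (v a) - tvar (v b) \<in> Pn n"
      using Pn_tvar[OF permutes_range[OF v ab(1)]] Pn_tvar[OF permutes_range[OF v ab(2)]]
      by (rule Pn_diff)
    moreover have "f v - f (v \<circ> transpose a b) \<in> Pn n"
      using v permutes_comp_transpose_iff[OF ab, of v] by (blast intro: Pn_diff Hs_Pn[OF f])
    moreover have "(tvar (v a) - tvar (v b)) dvd (f v - f (v \<circ> transpose a b))"
      using assms(4) v by (simp add: cond_holds_def)
    ultimately obtain r where "r \<in> Pn n" "f v - f (v \<circ> transpose a b) = (tvar (v a) - tvar (v b)) * r"
      by (rule dvd_PnE)
    then show ?thesis by blast
  qed
  then obtain r where r: "\<And>v. v permutes {1..n} \<Longrightarrow> ?P v (r v)" by metis
  define g where "g v = (if v permutes {1..n} then r v else 0)" for v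
  have "g \<in> Hs n"
    using r by (intro HsI) (simp_all add: g_def)
  moreover have "f v - f (v \<circ> transpose a b) = (xfun n a v - xfun n b v) * g v" for v
  proof (cases "v permutes {1..n}")
    case True
    then show ?thesis using r[OF True] by (simp add: g_def xfun_permutes)
  next
    case False
    then have vt: "\<not> (v \<circ> transpose a b) permutes {1..n}"
      using permutes_comp_transpose_iff[OF ab] by blast
    show ?thesis
      using Hs_outside[OF f False] Hs_outside[OF f vt] False by (simp add: g_def)
  qed
  ultimately show ?thesis by (rule that)
qed

lemma satisfies_iff_cond_holds:
  assumes f: "f \<in> Hs n" and ab: "a \<in> {1..n}" "b \<in> {1..n}" "a \<noteq> b"
  shows "satisfies n (transpose a b) f \<longleftrightarrow> cond_holds n a b f"
proof
  assume "satisfies n (transpose a b) f"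
  then obtain a' b' g where a'b': "transpose a b = transpose a' b'"
    and eq: "\<forall>v. f v - star f (transpose a b) v = (xfun n a' v - xfun n b' v) * g v"
    unfolding satisfies_def by metis
  have "cond_holds n a' b' f"
    unfolding cond_holds_def
  proof (intro allI impI)
    fix v assume "v permutes {1..n}"
    then show "(tvar (v a') - tvar (v b')) dvd (f v - f (v \<circ> transpose a' b'))"
      using eq[rule_format, of v] a'b' by (simp add: star_def xfun_permutes)
  qed
  then show "cond_holds n a b f"
    using cond_holds_transpose_eq[OF a'b' ab(3)] by simp
next
  assume "cond_holds n a b f"
  then obtain g where g: "g \<in> Hs n"
    and eq: "\<And>v. f v - f (v \<circ> transpose a b) = (xfun n a v - xfun n b v) * g v"
    using cond_holds_quotient[OF f ab(1,2)] by blast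
  have "\<forall>v. f v - star f (transpose a b) v = (xfun n a v - xfun n b v) * g v"
    by (simp add: star_def eq)
  then show "satisfies n (transpose a b) f"
    unfolding satisfies_def using ab(3) g by blast
qed

lemma HD_iff:
  assumes "D \<subseteq> transps n"
  shows "f \<in> HD n D \<longleftrightarrow> f \<in> Hs n \<and> conds_hold n D f"
proof -
  have "(\<forall>\<sigma>\<in>D. satisfies n \<sigma> f) \<longleftrightarrow> conds_hold n D f" if f: "f \<in> Hs n"
  proof
    assume "\<forall>\<sigma>\<in>D. satisfies n \<sigma> f"
    then show "conds_hold n D f"
      unfolding conds_hold_def using satisfies_iff_cond_holds[OF f] by blast
  next
    assume D: "conds_hold n D f"
    show "\<forall>\<sigma>\<in>D. satisfies n \<sigma> f"
    proof
      fix \<sigma> assume "\<sigma> \<in> D"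
      moreover obtain a b where "\<sigma> = transpose a b" "a \<in> {1..n}" "b \<in> {1..n}" "a \<noteq> b"
        using assms \<open>\<sigma> \<in> D\<close> unfolding transps_def by blast
      ultimately show "satisfies n \<sigma> f"
        using D satisfies_iff_cond_holds[OF f] unfolding conds_hold_def by blast
    qed
  qed
  then show ?thesis
    unfolding HD_def by blast
qed

lemma dvd_tvar_diff_transpose: "(tvar (v a) - tvar (v b)) dvd (tvar (v j) - tvar (v (transpose a b j)))"
proof -
  consider "j = a" | "j = b" | "j \<noteq> a" "j \<noteq> b" by blast
  then show ?thesis
  proof cases
    case 2
    have "tvar (v j) - tvar (v (transpose a b j)) = - (tvar (v a) - tvar (v b))"
      using 2 by simp
    then show ?thesis by (simp only: dvd_minus_iff dvd_refl)
  qed simp_all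
qed

lemma cond_holds_zero: "cond_holds n a b (\<lambda>v. 0)"
  by (simp add: cond_holds_def)

lemma cond_holds_add: "cond_holds n a b f \<Longrightarrow> cond_holds n a b g \<Longrightarrow> cond_holds n a b (\<lambda>v. f v + g v)"
  unfolding cond_holds_def by (simp add: add_diff_add)

lemma cond_holds_diff:
  assumes "cond_holds n a b f" "cond_holds n a b g"
  shows "cond_holds n a b (\<lambda>v. f v - g v)"
  unfolding cond_holds_def
proof (intro allI impI)
  fix v assume v: "v permutes {1..n}"
  have eq: "f v - g v - (f v' - g v') = (f v - f v') - (g v - g v')" for v'
    by (simp add: algebra_simps)
  show "(tvar (v a) - tvar (v b)) dvd
      (f v - g v - (f (v \<circ> transpose a b) - g (v \<circ> transpose a b)))"
    unfolding eq by (rule dvd_diff) (use assms v in \<open>auto simp: cond_holds_def\<close>)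
qed

lemma cond_holds_mult:
  assumes "cond_holds n a b f" "cond_holds n a b g"
  shows "cond_holds n a b (\<lambda>v. f v * g v)"
proof -
  have "f v * g v - f v' * g v' = f v * (g v - g v') + (f v - f v') * g v'" for v v'
    by (simp add: algebra_simps)
  then show ?thesis
    using assms unfolding cond_holds_def by simp
qed

lemma cond_holds_cmult: "cond_holds n a b f \<Longrightarrow> cond_holds n a b (\<lambda>v. p * f v)"
  unfolding cond_holds_def by (simp add: right_diff_distrib[symmetric])

lemma cond_holds_xfun:
  assumes "a \<in> {1..n}" "b \<in> {1..n}"
  shows "cond_holds n a b (xfun n c)"
  unfolding cond_holds_def
proof (intro allI impI)
  fix v assume v: "v permutes {1..n}"
  then have "(v \<circ> transpose a b) permutes {1..n}"
    using permutes_comp_transpose_iff[OF assms] by blast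
  then show "(tvar (v a) - tvar (v b)) dvd (xfun n c v - xfun n c (v \<circ> transpose a b))"
    using v by (simp add: xfun_permutes dvd_tvar_diff_transpose)
qed

lemma conds_hold_mono: "conds_hold n D f \<Longrightarrow> D' \<subseteq> D \<Longrightarrow> conds_hold n D' f"
  unfolding conds_hold_def by blast

lemma conds_hold_zero: "conds_hold n D (\<lambda>v. 0)"
  by (simp add: conds_hold_def cond_holds_zero)

lemma conds_hold_add: "conds_hold n D f \<Longrightarrow> conds_hold n D g \<Longrightarrow> conds_hold n D (\<lambda>v. f v + g v)"
  by (simp add: conds_hold_def cond_holds_add)

lemma conds_hold_diff: "conds_hold n D f \<Longrightarrow> conds_hold n D g \<Longrightarrow> conds_hold n D (\<lambda>v. f v - g v)"
  by (simp add: conds_hold_def cond_holds_diff)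

lemma conds_hold_cmult: "conds_hold n D f \<Longrightarrow> conds_hold n D (\<lambda>v. p * f v)"
  by (simp add: conds_hold_def cond_holds_cmult)

section \<open>Divided differences\<close>

definition s_invariant :: "nat \<Rightarrow> ((nat \<Rightarrow> nat) \<Rightarrow> cpoly) \<Rightarrow> bool" where
  "s_invariant i f \<longleftrightarrow> (\<forall>v. f (v \<circ> sref i) = f v)"

lemma star_sref_eq_iff: "star f (sref i) = f \<longleftrightarrow> s_invariant i f"
  by (simp add: star_def sref_def s_invariant_def fun_eq_iff)

lemma HDinv_iff:
  assumes "D \<subseteq> transps n"
  shows "f \<in> HDinv n i D \<longleftrightarrow> f \<in> Hs n \<and> conds_hold n D f \<and> s_invariant i f"
  unfolding HDinv_def using HD_iff[OF assms] star_sref_eq_iff by auto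

lemma s_invariant_cond_holds: "s_invariant i f \<Longrightarrow> cond_holds n i (Suc i) f"
  unfolding cond_holds_def s_invariant_def sref_def by simp

lemma s_invariant_cond_holds_conj:
  assumes f: "s_invariant i f" and ab: "cond_holds n a b f" and i: "i \<in> {1..n}" "Suc i \<in> {1..n}"
  shows "cond_holds n (sref i a) (sref i b) f"
  unfolding cond_holds_def
proof (intro allI impI)
  fix v assume "v permutes {1..n}"
  then have vs: "(v \<circ> sref i) permutes {1..n}"
    using permutes_comp_sref_iff[OF i] by blast
  have "(tvar (v (sref i a)) - tvar (v (sref i b))) dvd
      (f (v \<circ> sref i) - f (v \<circ> sref i \<circ> transpose a b))"
    using ab[unfolded cond_holds_def, rule_format, OF vs] by simp
  moreover have "f (v \<circ> sref i \<circ> transpose a b) = f (v \<circ> transpose (sref i a) (sref i b))"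
    using f unfolding s_invariant_def sref_conj_transpose[symmetric]
    by (metis comp_assoc)
  ultimately show "(tvar (v (sref i a)) - tvar (v (sref i b))) dvd
      (f v - f (v \<circ> transpose (sref i a) (sref i b)))"
    using f by (simp add: s_invariant_def)
qed

lemma divided_difference:
  assumes f: "f \<in> Hs n" and i: "i \<in> {1..n}" "Suc i \<in> {1..n}" and "cond_holds n i (Suc i) f"
  obtains g where "g \<in> Hs n" "s_invariant i g"
    "\<And>v. f v - f (v \<circ> sref i) = (xfun n i v - xfun n (Suc i) v) * g v"
proof -
  obtain g where g: "g \<in> Hs n"
    and eq: "\<And>v. f v - f (v \<circ> sref i) = (xfun n i v - xfun n (Suc i) v) * g v"
    using cond_holds_quotient[OF f i assms(4)] unfolding sref_def by blast
  have "g (v \<circ> sref i) = g v" for v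
  proof (cases "v permutes {1..n}")
    case True
    then have vs: "(v \<circ> sref i) permutes {1..n}"
      using permutes_comp_sref_iff[OF i] by blast
    have "(tvar (v i) - tvar (v (Suc i))) * g v = f v - f (v \<circ> sref i)"
      using eq[of v] True by (simp add: xfun_permutes)
    also have "\<dots> = - (f (v \<circ> sref i) - f (v \<circ> sref i \<circ> sref i))"
      by (simp add: sref_def comp_assoc)
    also have "\<dots> = (tvar (v i) - tvar (v (Suc i))) * g (v \<circ> sref i)"
      using eq[of "v \<circ> sref i"] vs by (simp add: xfun_permutes sref_def algebra_simps)
    finally show ?thesis
      using permutes_inj[OF True] by (simp add: inj_eq)
  next
    case False
    then have "\<not> (v \<circ> sref i) permutes {1..n}"
      using permutes_comp_sref_iff[OF i] by blast
    then show ?thesis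
      using Hs_outside[OF g] False by simp
  qed
  then show ?thesis
    using that g eq by (simp add: s_invariant_def)
qed

text \<open>Compare the divided-difference identities at v and at v (a b): the condition (a b) on f,
 and the condition (s_i a, s_i b) read at v s_i, make t_(v a) - t_(v b) divide
 (t_(v i) - t_(v (i+1))) (g v - g (v (a b))); since {a, b} \<noteq> {i, i+1}, the first factor cancels.\<close>
lemma divided_difference_cond_holds:
  assumes f: "f \<in> Hs n" and i: "i \<in> {1..n}" "Suc i \<in> {1..n}"
    and g: "\<And>v. f v - f (v \<circ> sref i) = (xfun n i v - xfun n (Suc i) v) * g v"
    and ab: "a \<in> {1..n}" "b \<in> {1..n}" "a \<noteq> b" "{a, b} \<noteq> {i, Suc i}"
    and f_ab: "cond_holds n a b f" and f_conj: "cond_holds n (sref i a) (sref i b) f"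
  shows "cond_holds n a b g"
  unfolding cond_holds_def
proof (intro allI impI)
  fix v assume v: "v permutes {1..n}"
  let ?s = "sref i" and ?t = "transpose a b"
  let ?q = "tvar (v a) - tvar (v b)"
  let ?p = "tvar (v i) - tvar (v (Suc i))"
  let ?p' = "tvar (v (?t i)) - tvar (v (?t (Suc i)))"
  have vt: "(v \<circ> ?t) permutes {1..n}"
    using permutes_comp_transpose_iff[OF ab(1,2)] v by blast
  have vs: "(v \<circ> ?s) permutes {1..n}"
    using permutes_comp_sref_iff[OF i] v by blast
  have "?p * (g v - g (v \<circ> ?t)) =
      ((f v - f (v \<circ> ?t)) - (f (v \<circ> ?s) - f (v \<circ> ?t \<circ> ?s))) - (?p - ?p') * g (v \<circ> ?t)"
    using g[of v] g[of "v \<circ> ?t"] v vt by (simp add: xfun_permutes algebra_simps)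
  moreover have "?q dvd f v - f (v \<circ> ?t)"
    using f_ab[unfolded cond_holds_def, rule_format, OF v] .
  moreover have "?q dvd f (v \<circ> ?s) - f (v \<circ> ?t \<circ> ?s)"
  proof -
    have "?s \<circ> transpose (?s a) (?s b) = ?t \<circ> ?s"
      using sref_conj_transpose[of i a b] by (metis comp_assoc comp_id sref_def transpose_comp_involutory)
    then show ?thesis
      using f_conj[unfolded cond_holds_def, rule_format, OF vs] by (simp add: comp_assoc sref_def)
  qed
  moreover have "?q dvd ?p - ?p'"
  proof -
    have "?p - ?p' = (tvar (v i) - tvar (v (?t i))) - (tvar (v (Suc i)) - tvar (v (?t (Suc i))))"
      by (simp add: algebra_simps)
    then show ?thesis
      by (simp only: dvd_diff dvd_tvar_diff_transpose)
  qed
  ultimately have "?q dvd ?p * (g v - g (v \<circ> ?t))"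
    by (simp add: dvd_diff)
  moreover have "{v i, v (Suc i)} \<noteq> {v a, v b}"
    using ab(4) permutes_inj[OF v] by (auto simp: inj_eq doubleton_eq_iff)
  ultimately show "?q dvd g v - g (v \<circ> ?t)"
    using permutes_inj[OF v] by (auto intro: tvar_diff_dvd_mult_cancel simp: inj_eq)
qed

lemma cond_holds_mult_antiinvariant:
  assumes "\<And>v. v permutes {1..n} \<Longrightarrow> y (v \<circ> transpose a b) = - y v"
    and "\<And>v. v permutes {1..n} \<Longrightarrow> (tvar (v a) - tvar (v b)) dvd y v"
  shows "cond_holds n a b (\<lambda>v. y v * h v)"
  unfolding cond_holds_def
proof (intro allI impI)
  fix v assume v: "v permutes {1..n}"
  then have "y v * h v - y (v \<circ> transpose a b) * h (v \<circ> transpose a b) =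
      y v * (h v + h (v \<circ> transpose a b))"
    using assms(1) by (simp add: algebra_simps)
  then show "(tvar (v a) - tvar (v b)) dvd y v * h v - y (v \<circ> transpose a b) * h (v \<circ> transpose a b)"
    using assms(2)[OF v] by simp
qed

section \<open>The dot action\<close>

lemma dot_Hs:
  assumes w: "w permutes {1..n}" and f: "f \<in> Hs n"
  shows "dot w f \<in> Hs n"
proof (rule HsI)
  fix v assume "v permutes {1..n}"
  then have "f (inv w \<circ> v) \<in> Pn n"
    using Hs_Pn[OF f] permutes_inv_comp_iff[OF w] by blast
  then show "dot w f v \<in> Pn n"
    unfolding dot_def using permutes_range[OF w] by (rule subst_vars_Pn[rotated])
next
  fix v assume "\<not> v permutes {1..n}"
  then show "dot w f v = 0"
    using Hs_outside[OF f] permutes_inv_comp_iff[OF w] by (simp add: dot_def)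
qed

lemma dot_cond_holds:
  assumes w: "w permutes {1..n}" and f: "cond_holds n a b f"
  shows "cond_holds n a b (dot w f)"
  unfolding cond_holds_def
proof (intro allI impI)
  fix v assume v: "v permutes {1..n}"
  let ?u = "inv w \<circ> v" and ?t = "transpose a b"
  have u: "?u permutes {1..n}" using permutes_inv_comp_iff[OF w] v by blast
  obtain r where r: "f ?u - f (?u \<circ> ?t) = (tvar (?u a) - tvar (?u b)) * r"
    using f[unfolded cond_holds_def, rule_format, OF u] unfolding dvd_def by blast
  have w_u: "w (?u x) = v x" for x
    by (simp add: permutes_inverses(1)[OF w])
  have "dot w f v - dot w f (v \<circ> ?t) = subst_vars w (f ?u - f (?u \<circ> ?t))"
    by (simp add: dot_def subst_vars_diff comp_assoc)
  also have "\<dots> = (tvar (v a) - tvar (v b)) * subst_vars w r"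
    unfolding r by (simp add: subst_vars_mult subst_vars_diff subst_vars_tvar w_u[simplified])
  finally show "(tvar (v a) - tvar (v b)) dvd (dot w f v - dot w f (v \<circ> ?t))" by simp
qed

lemma dot_mult: "dot w (\<lambda>v. f v * g v) = (\<lambda>v. dot w f v * dot w g v)"
  by (simp add: dot_def subst_vars_mult)

lemma dot_xfun:
  assumes w: "w permutes {1..n}"
  shows "dot w (xfun n j) = xfun n j"
proof
  fix v
  show "dot w (xfun n j) v = xfun n j v"
    using permutes_inv_comp_iff[OF w, of v]
    by (cases "v permutes {1..n}")
       (simp_all add: dot_def xfun_def subst_vars_tvar permutes_inverses(1)[OF w])
qed

lemma dot_diff: "dot w (\<lambda>v. f v - g v) = (\<lambda>v. dot w f v - dot w g v)"
  by (simp add: dot_def subst_vars_diff)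

lemma dot_conds_hold: "w permutes {1..n} \<Longrightarrow> conds_hold n D f \<Longrightarrow> conds_hold n D (dot w f)"
  by (simp add: conds_hold_def dot_cond_holds)

lemma HDinv_zero: "D \<subseteq> transps n \<Longrightarrow> (\<lambda>v. 0) \<in> HDinv n i D"
  by (simp add: HDinv_iff Hs_zero conds_hold_zero s_invariant_def)

lemma HDinv_dot_submodule:
  assumes D: "D \<subseteq> transps n"
  shows "dot_submodule n (HDinv n i D)"
proof -
  have HDinv_eq: "HDinv n i D = {f. f \<in> Hs n \<and> conds_hold n D f \<and> s_invariant i f}"
    using HDinv_iff[OF D] by blast
  show ?thesis
    unfolding dot_submodule_def HDinv_eq
    by (auto simp: Hs_zero Hs_add Hs_cmult dot_Hs conds_hold_zero conds_hold_add conds_hold_cmult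
        dot_conds_hold s_invariant_def) (simp add: dot_def flip: comp_assoc)
qed

lemma mult_set_iff: "f \<in> mult_set y A \<longleftrightarrow> (\<exists>g\<in>A. f = (\<lambda>v. y v * g v))"
  by (auto simp: mult_set_def)

lemma mult_set_dot_submodule:
  assumes A: "dot_submodule n A" and y: "y \<in> Hs n"
    and y_dot: "\<And>w. w permutes {1..n} \<Longrightarrow> dot w y = y"
  shows "dot_submodule n (mult_set y A)"
proof -
  have A_Hs: "A \<subseteq> Hs n" and A_zero: "(\<lambda>v. 0) \<in> A"
    and A_add: "\<And>f g. f \<in> A \<Longrightarrow> g \<in> A \<Longrightarrow> (\<lambda>v. f v + g v) \<in> A"
    and A_cmult: "\<And>p f. p \<in> Pn n \<Longrightarrow> f \<in> A \<Longrightarrow> (\<lambda>v. p * f v) \<in> A"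
    and A_dot: "\<And>w f. w permutes {1..n} \<Longrightarrow> f \<in> A \<Longrightarrow> dot w f \<in> A"
    using A unfolding dot_submodule_def by blast+
  show ?thesis
    unfolding dot_submodule_def
  proof (intro conjI ballI allI impI subsetI)
    fix f assume "f \<in> mult_set y A"
    then obtain g where "g \<in> A" "f = (\<lambda>v. y v * g v)"
      unfolding mult_set_iff by blast
    then show "f \<in> Hs n"
      using Hs_mult[OF y] A_Hs by blast
  next
    show "(\<lambda>v. 0) \<in> mult_set y A"
      unfolding mult_set_iff using A_zero by force
  next
    fix f g assume "f \<in> mult_set y A" "g \<in> mult_set y A"
    then obtain f' g' where "f' \<in> A" "g' \<in> A" "f = (\<lambda>v. y v * f' v)" "g = (\<lambda>v. y v * g' v)"
      unfolding mult_set_iff by blast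
    then show "(\<lambda>v. f v + g v) \<in> mult_set y A"
      unfolding mult_set_iff using A_add by (force simp: algebra_simps)
  next
    fix p f assume "p \<in> Pn n" "f \<in> mult_set y A"
    then obtain g where "g \<in> A" "f = (\<lambda>v. y v * g v)"
      unfolding mult_set_iff by blast
    then show "(\<lambda>v. p * f v) \<in> mult_set y A"
      unfolding mult_set_iff using A_cmult[OF \<open>p \<in> Pn n\<close>] by (force simp: algebra_simps)
  next
    fix w f assume w: "w permutes {1..n}" and "f \<in> mult_set y A"
    then obtain g where "g \<in> A" "f = (\<lambda>v. y v * g v)"
      unfolding mult_set_iff by blast
    then show "dot w f \<in> mult_set y A"
      unfolding mult_set_iff using A_dot[OF w] y_dot[OF w] by (force simp: dot_mult)
  qed
qed

section \<open>The decomposition\<close>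

text \<open>\<tau> = (c e) covers both cases of the theorem: c = i (with e = k), or e = i+1 (with c = k),
 and in both cases the multiplier is x_c - x_e.\<close>
locale almost_stable =
  fixes n i :: nat and C :: "(nat \<Rightarrow> nat) set" and c e :: nat
  assumes i_range: "i \<in> {1..n}" "Suc i \<in> {1..n}"
    and C_transps: "C \<subseteq> transps n"
    and sref_in_C: "sref i \<in> C"
    and tau_in_C: "transpose c e \<in> C"
    and conj_tau_notin_C: "sref i \<circ> transpose c e \<circ> sref i \<notin> C"
    and tau_unique: "\<forall>\<sigma>\<in>C. sref i \<circ> \<sigma> \<circ> sref i \<notin> C \<longrightarrow> \<sigma> = transpose c e"
    and tau_shape: "c = i \<or> e = Suc i"
begin

abbreviation \<tau> where "\<tau> \<equiv> transpose c e"
abbreviation C_plus where "C_plus \<equiv> insert (sref i \<circ> \<tau> \<circ> sref i) C"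
abbreviation C_minus where "C_minus \<equiv> C - {\<tau>}"
abbreviation y where "y \<equiv> \<lambda>v. xfun n c v - xfun n e v"

lemma ce_range: "c \<in> {1..n}" "e \<in> {1..n}" "c \<noteq> e"
  using C_transps tau_in_C transpose_in_transps_iff by blast+

lemma C_plus_transps: "C_plus \<subseteq> transps n"
proof -
  have "sref i \<circ> \<tau> \<circ> sref i \<in> transps n"
    unfolding sref_conj_transpose
    using sref_range[OF i_range ce_range(1)] sref_range[OF i_range ce_range(2)] ce_range(3)
    by (simp add: transpose_in_transps_iff sref_eq_iff)
  then show ?thesis
    using C_transps by blast
qed

lemma C_minus_transps: "C_minus \<subseteq> transps n"
  using C_transps by blast

lemma tau_ne_sref: "\<tau> \<noteq> sref i"
proof
  assume "\<tau> = sref i"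
  then have "sref i \<circ> \<tau> \<circ> sref i = sref i"
    by (simp add: sref_def comp_assoc)
  then show False
    using sref_in_C conj_tau_notin_C by simp
qed

lemma y_Hs: "y \<in> Hs n"
  using Hs_diff[OF xfun_Hs xfun_Hs] ce_range by blast

lemma dot_y: "w permutes {1..n} \<Longrightarrow> dot w y = y"
  by (simp add: dot_diff dot_xfun)

lemma y_cond_holds: "a \<in> {1..n} \<Longrightarrow> b \<in> {1..n} \<Longrightarrow> cond_holds n a b y"
  by (intro cond_holds_diff cond_holds_xfun)

text \<open>This is where the hypothesis on the shape of \<tau> is used.\<close>
lemma y_minus_star_sref:
  assumes v: "v permutes {1..n}"
  shows "y v - y (v \<circ> sref i) = tvar (v i) - tvar (v (Suc i))"
proof -
  have "(v \<circ> sref i) permutes {1..n}"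
    using permutes_comp_sref_iff[OF i_range] v by blast
  then have "y v - y (v \<circ> sref i) =
      tvar (v c) - tvar (v e) - (tvar (v (sref i c)) - tvar (v (sref i e)))"
    using v by (simp add: xfun_permutes)
  also have "\<dots> = tvar (v i) - tvar (v (Suc i))"
  proof -
    have "\<not> (c = i \<and> e = Suc i)" "\<not> (c = Suc i \<and> e = i)"
      using tau_ne_sref by (auto simp: sref_def transpose_commute)
    then show ?thesis
      using tau_shape ce_range(3) by (auto simp: sref_def)
  qed
  finally show ?thesis .
qed

lemma y_mult_conds_hold:
  assumes "conds_hold n C_minus h"
  shows "conds_hold n C (\<lambda>v. y v * h v)"
  unfolding conds_hold_def
proof (intro ballI impI)
  fix a b assume ab: "a \<in> {1..n}" "b \<in> {1..n}" "a \<noteq> b" "transpose a b \<in> C"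
  show "cond_holds n a b (\<lambda>v. y v * h v)"
  proof (cases "transpose a b = \<tau>")
    case True
    have "cond_holds n c e (\<lambda>v. y v * h v)"
    proof (rule cond_holds_mult_antiinvariant)
      fix v assume v: "v permutes {1..n}"
      then have "(v \<circ> \<tau>) permutes {1..n}"
        using permutes_comp_transpose_iff[OF ce_range(1,2)] by blast
      then show "y (v \<circ> \<tau>) = - y v"
        using v by (simp add: xfun_permutes)
      show "(tvar (v c) - tvar (v e)) dvd y v"
        using v by (simp add: xfun_permutes)
    qed
    then show ?thesis
      using cond_holds_transpose_eq[OF True[symmetric] ce_range(3)] by simp
  next
    case False
    then have "cond_holds n a b h"
      using assms ab by (simp add: conds_hold_def)
    then show ?thesis
      using y_cond_holds[OF ab(1,2)] by (rule cond_holds_mult[rotated])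
  qed
qed

lemma sum_in_HD:
  assumes "f \<in> HDinv n i C_plus" "g \<in> HDinv n i C_minus"
  shows "(\<lambda>v. f v + y v * g v) \<in> HD n C"
proof -
  have "f \<in> Hs n" "conds_hold n C f" "g \<in> Hs n" "conds_hold n C_minus g"
    using assms HDinv_iff[OF C_plus_transps] HDinv_iff[OF C_minus_transps] conds_hold_mono
    by blast+
  then show ?thesis
    unfolding HD_iff[OF C_transps]
    by (simp add: Hs_add Hs_mult y_Hs conds_hold_add y_mult_conds_hold)
qed

lemma divided_difference_in_HDinv:
  assumes f: "f \<in> HD n C" and g: "g \<in> Hs n" "s_invariant i g"
    and eq: "\<And>v. f v - f (v \<circ> sref i) = (xfun n i v - xfun n (Suc i) v) * g v"
  shows "g \<in> HDinv n i C_minus"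
  unfolding HDinv_iff[OF C_minus_transps] conds_hold_def
proof (intro conjI ballI impI g)
  fix a b assume ab: "a \<in> {1..n}" "b \<in> {1..n}" "a \<noteq> b" "transpose a b \<in> C_minus"
  have f': "f \<in> Hs n" "conds_hold n C f"
    using f HD_iff[OF C_transps] by blast+
  show "cond_holds n a b g"
  proof (cases "{a, b} = {i, Suc i}")
    case True
    then show ?thesis
      using s_invariant_cond_holds[OF g(2)] cond_holds_commute by (auto simp: doubleton_eq_iff)
  next
    case False
    have "sref i \<circ> transpose a b \<circ> sref i \<in> C"
      using tau_unique ab(4) by blast
    then have "transpose (sref i a) (sref i b) \<in> C"
      by (simp add: sref_conj_transpose)
    then have "cond_holds n (sref i a) (sref i b) f"
      using f'(2) sref_range[OF i_range] ab(1-3) by (simp add: conds_hold_def sref_eq_iff)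
    moreover have "cond_holds n a b f"
      using f'(2) ab by (simp add: conds_hold_def)
    ultimately show ?thesis
      using divided_difference_cond_holds[OF f'(1) i_range eq ab(1-3) False] by blast
  qed
qed

lemma remainder_in_HDinv:
  assumes f: "f \<in> HD n C" and g: "g \<in> HDinv n i C_minus"
    and eq: "\<And>v. f v - f (v \<circ> sref i) = (xfun n i v - xfun n (Suc i) v) * g v"
  shows "(\<lambda>v. f v - y v * g v) \<in> HDinv n i C_plus"
proof -
  let ?r = "\<lambda>v. f v - y v * g v"
  have f': "f \<in> Hs n" "conds_hold n C f"
    using f HD_iff[OF C_transps] by blast+
  have g': "g \<in> Hs n" "conds_hold n C_minus g" "s_invariant i g"
    using g HDinv_iff[OF C_minus_transps] by blast+
  have r_Hs: "?r \<in> Hs n"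
    by (intro Hs_diff Hs_mult f'(1) g'(1) y_Hs)
  have r_inv: "s_invariant i ?r"
    unfolding s_invariant_def
  proof
    fix v
    show "?r (v \<circ> sref i) = ?r v"
    proof (cases "v permutes {1..n}")
      case True
      have "?r v - ?r (v \<circ> sref i) = (f v - f (v \<circ> sref i)) - (y v - y (v \<circ> sref i)) * g v"
        using g'(3) by (simp add: s_invariant_def algebra_simps)
      also have "\<dots> = 0"
        unfolding y_minus_star_sref[OF True] eq using True by (simp add: xfun_permutes)
      finally show ?thesis by simp
    next
      case False
      then have "\<not> (v \<circ> sref i) permutes {1..n}"
        using permutes_comp_sref_iff[OF i_range] by blast
      then show ?thesis
        using Hs_outside[OF r_Hs] False by metis
    qed
  qed
  have r_C: "conds_hold n C ?r"
    by (rule conds_hold_diff[OF f'(2) y_mult_conds_hold[OF g'(2)]])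
  have "cond_holds n c e ?r"
    using r_C ce_range tau_in_C unfolding conds_hold_def by blast
  then have r_conj: "cond_holds n (sref i c) (sref i e) ?r"
    by (rule s_invariant_cond_holds_conj[OF r_inv _ i_range])
  have "conds_hold n C_plus ?r"
    unfolding conds_hold_def
  proof (intro ballI impI)
    fix a b assume ab: "a \<in> {1..n}" "b \<in> {1..n}" "a \<noteq> b" "transpose a b \<in> C_plus"
    show "cond_holds n a b ?r"
    proof (cases "transpose a b \<in> C")
      case True
      then show ?thesis
        using r_C ab unfolding conds_hold_def by blast
    next
      case False
      then have "transpose (sref i c) (sref i e) = transpose a b"
        using ab(4) by (simp add: sref_conj_transpose)
      then show ?thesis
        using r_conj cond_holds_transpose_eq[of "sref i c" "sref i e" a b] ce_range(3)
        by (simp add: sref_eq_iff)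
    qed
  qed
  then show ?thesis
    using r_Hs r_inv HDinv_iff[OF C_plus_transps] by blast
qed

lemma HD_decomposition:
  assumes f: "f \<in> HD n C"
  obtains g where "g \<in> HDinv n i C_minus" "(\<lambda>v. f v - y v * g v) \<in> HDinv n i C_plus"
proof -
  have f': "f \<in> Hs n" "conds_hold n C f"
    using f HD_iff[OF C_transps] by blast+
  have "cond_holds n i (Suc i) f"
    using f'(2) sref_in_C i_range by (simp add: conds_hold_def sref_def)
  then obtain g where "g \<in> Hs n" "s_invariant i g"
    and eq: "\<And>v. f v - f (v \<circ> sref i) = (xfun n i v - xfun n (Suc i) v) * g v"
    using divided_difference[OF f'(1) i_range] by blast
  then have "g \<in> HDinv n i C_minus"
    using divided_difference_in_HDinv[OF f] by blast
  then show ?thesis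
    using remainder_in_HDinv[OF f _ eq] that by blast
qed

lemma HDinv_inter_mult_set: "HDinv n i C_plus \<inter> mult_set y (HDinv n i C_minus) = {\<lambda>v. 0}"
proof -
  have g_zero: "g v = 0" if h: "(\<lambda>v. y v * g v) \<in> HDinv n i C_plus" and g: "g \<in> HDinv n i C_minus"
    for g v
  proof (cases "v permutes {1..n}")
    case True
    have "s_invariant i g" "s_invariant i (\<lambda>v. y v * g v)"
      using g h HDinv_iff[OF C_minus_transps] HDinv_iff[OF C_plus_transps] by blast+
    then have "(y v - y (v \<circ> sref i)) * g v = 0"
      by (simp add: s_invariant_def algebra_simps)
    then show ?thesis
      using permutes_inj[OF True] by (simp add: y_minus_star_sref[OF True] inj_eq)
  next
    case False
    then show ?thesis
      using g HDinv_iff[OF C_minus_transps] Hs_outside by blast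
  qed
  have "(\<lambda>v. 0) \<in> mult_set y (HDinv n i C_minus)"
    unfolding mult_set_iff using HDinv_zero[OF C_minus_transps]
    by (intro bexI[of _ "\<lambda>v. 0"]) simp_all
  moreover have "h = (\<lambda>v. 0)" if h: "h \<in> HDinv n i C_plus" "h \<in> mult_set y (HDinv n i C_minus)" for h
  proof -
    obtain g where g: "g \<in> HDinv n i C_minus" "h = (\<lambda>v. y v * g v)"
      using h(2) unfolding mult_set_iff by blast
    then show ?thesis
      using g_zero[of g] h(1) by auto
  qed
  ultimately show ?thesis
    using HDinv_zero[OF C_plus_transps] by auto
qed

lemma direct_sum: "is_direct_sum n (HD n C) (HDinv n i C_plus) (mult_set y (HDinv n i C_minus))"
proof -
  have "HD n C = {\<lambda>v. a v + b v |a b. a \<in> HDinv n i C_plus \<and> b \<in> mult_set y (HDinv n i C_minus)}"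
  proof (intro subset_antisym subsetI)
    fix f assume "f \<in> HD n C"
    then obtain g where "g \<in> HDinv n i C_minus" "(\<lambda>v. f v - y v * g v) \<in> HDinv n i C_plus"
      by (rule HD_decomposition)
    then show "f \<in> {\<lambda>v. a v + b v |a b. a \<in> HDinv n i C_plus \<and> b \<in> mult_set y (HDinv n i C_minus)}"
      unfolding mult_set_iff by force
  qed (auto simp: mult_set_iff sum_in_HD)
  then show ?thesis
    unfolding is_direct_sum_def
    using HDinv_dot_submodule[OF C_plus_transps] HDinv_inter_mult_set
      mult_set_dot_submodule[OF HDinv_dot_submodule[OF C_minus_transps] y_Hs dot_y]
    by blast
qed

end

theorem theorem2:
  fixes n i :: nat and C :: "(nat \<Rightarrow> nat) set" and \<tau> :: "nat \<Rightarrow> nat"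
  assumes "n \<ge> 1" and "1 \<le> i" and "i \<le> n - 1"
    and "C \<subseteq> transps n"
    and "sref i \<in> C"
    and "\<tau> \<in> C" and "sref i \<circ> \<tau> \<circ> sref i \<notin> C"
    and "\<forall>\<tau>' \<in> C. sref i \<circ> \<tau>' \<circ> sref i \<notin> C \<longrightarrow> \<tau>' = \<tau>"
  shows "(\<forall>k. \<tau> = transpose i k \<longrightarrow>
            is_direct_sum n (HD n C)
              (HDinv n i (insert (sref i \<circ> \<tau> \<circ> sref i) C))
              (mult_set (\<lambda>v. xfun n i v - xfun n k v) (HDinv n i (C - {\<tau>}))))
       \<and> ((\<nexists>k. \<tau> = transpose i k) \<longrightarrow>
            (\<exists>k. \<tau> = transpose (Suc i) k \<and>
              is_direct_sum n (HD n C)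
                (HDinv n i (insert (sref i \<circ> \<tau> \<circ> sref i) C))
                (mult_set (\<lambda>v. xfun n k v - xfun n (Suc i) v) (HDinv n i (C - {\<tau>})))))"
proof -
  have i_range: "i \<in> {1..n}" "Suc i \<in> {1..n}"
    using assms(1-3) by auto
  have stable: "almost_stable n i C c e" if "\<tau> = transpose c e" "c = i \<or> e = Suc i" for c e
    using that i_range assms(4-8) unfolding almost_stable_def by blast
  show ?thesis
  proof (intro conjI allI impI)
    fix k assume k: "\<tau> = transpose i k"
    show "is_direct_sum n (HD n C) (HDinv n i (insert (sref i \<circ> \<tau> \<circ> sref i) C))
        (mult_set (\<lambda>v. xfun n i v - xfun n k v) (HDinv n i (C - {\<tau>})))"
      using almost_stable.direct_sum[OF stable[OF k disjI1[OF refl]]] k by simp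
  next
    assume "\<nexists>k. \<tau> = transpose i k"
    then obtain k where k: "\<tau> = transpose k (Suc i)"
      using transps_moved_by_sref assms(4,6,7) by (metis subsetD)
    then show "\<exists>k. \<tau> = transpose (Suc i) k \<and> is_direct_sum n (HD n C)
        (HDinv n i (insert (sref i \<circ> \<tau> \<circ> sref i) C))
        (mult_set (\<lambda>v. xfun n k v - xfun n (Suc i) v) (HDinv n i (C - {\<tau>})))"
      using almost_stable.direct_sum[OF stable[OF k disjI2[OF refl]]] k by (auto simp: transpose_commute)
  qed
qed

end
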